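(* Both drift-plus-penalty (DPP) scheduling algorithms described in the context (the one for average AoI minimization and the one for average peak-AoI minimization) guarantee that the data queue at node $S_1$ is strongly stable. The queue backlog $Q(t)$ of $S_1$ satisfies \[ \limsup_{t\rightarrow \infty} \frac{1}{t}\sum_{\tau=0}^{t-1}\mathbb{E}[Q(\tau)]\leq \frac{C+V}{\epsilon}. \] This inequality holds for any value of $\epsilon$ bounded by $0\leq \epsilon\leq \min\{p_{1/1}-\lambda, \delta\cdot p_{2/1,2}\}$. Here, $C=\frac{\lambda^2+1}{2}$ for the AoI-minimization algorithm and $C=\frac{\alpha_{\max}^2+\lambda^2+2}{2}$ for the peak-AoI-minimization algorithm, and $V$ is a constant weight that affects the tradeoff between performance optimization and queue congestion.
   Context: Time-slotted multiple access channel: two source nodes transmit to a common destination. Node $S_1$ is grid-connected; data packets arrive at its infinite queue as a Bernoulli process $a_1(t)$ with probability $\lambda$, and $Q(t+1)=\max[Q(t)-b_1(t),0]+a_1(t)$, where $b_1(t)=1$ iff a packet of $S_1$ is successfully received in slot $t$. Node $S_2$ is an energy-harvesting sensor: energy arrivals $a_2(t)$ are Bernoulli with probability $\delta$, battery $B(t+1)=\max[B(t)-u_2(t),0]+a_2(t)$, each transmission uses one energy unit, and $H(t)=\mathds{1}\{B(t)>0\}$ (indicator that the battery is non-empty). Scheduling decision $\mathbf{U}(t)=(u_1(t),u_2(t))\in\{(1,1),(1,0),(0,1),(0,0)\}$. Success probabilities: $p_{i/i}$ when only $S_i$ transmits, $p_{i/i,j}$ when both transmit. Conditional success probabilities: $p_1(t)=p_{1/1,2}$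 if $\mathbf{U}(t)=(1,1)$, $p_{1/1}$ if $(1,0)$, $0$ otherwise; $p_2(t)=p_{2/1,2}$ if $(1,1)$, $p_{2/2}$ if $(0,1)$, $0$ otherwise; $b_i(t)$ is the success indicator of $S_i$ given $\mathbf{U}(t)$. The AoI of $S_2$ evolves as $A(t+1)=A(t)+1-H(t)b_2(t)A(t)$. The problem is assumed feasible, $\lambda<p_{1/1}$. AoI-minimization DPP algorithm: in each slot $t$, observe $Q(t),A(t),H(t)$ and choose $\mathbf{U}(t)$ maximizing $p_1(t)Q(t)+V p_2(t)H(t)A(t)$, with $V>0$ a constant penalty weight; then update $Q,B,A$. Peak-AoI-minimization DPP algorithm: with constants $\alpha_{\max}$ (sufficiently large) and $V$, and a virtual queue $Z(t+1)=\max[Z(t)+\alpha(t)-H(t)b_2(t),0]$, $Z(0)=0$: in each slot observe $Q(t),Z(t),H(t)$ and choose $\mathbf{U}(t)$ maximizing $Z(t)H(t)p_2(t)+Q(t)p_1(t)$; set the auxiliary variable $\alpha(t)=\alpha_{\max}$ if $Z(t)\le V$ and $\alpha(t)=0$ otherwise; then update $Q,B,Z$. Both start from $Q(0)=0$, $B(0)=0$. *)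

theory Defs
  imports "HOL-Probability.Probability"
begin

text \<open>Two-source multiple access channel.  A scheduling decision is a pair
  (u1, u2) of booleans: u_i = True iff S_i transmits.\<close>

type_synonym decision = "bool \<times> bool"

text \<open>Conditional success probabilities p_1(t), p_2(t) as functions of U(t).
  p11 = p_{1/1}, p22 = p_{2/2}, p112 = p_{1/1,2}, p212 = p_{2/1,2}.\<close>

definition succ1 :: "real \<Rightarrow> real \<Rightarrow> decision \<Rightarrow> real" where
  "succ1 p11 p112 U = (case U of (True, True) \<Rightarrow> p112 | (True, False) \<Rightarrow> p11 | _ \<Rightarrow> 0)"

definition succ2 :: "real \<Rightarrow> real \<Rightarrow> decision \<Rightarrow> real" where
  "succ2 p22 p212 U = (case U of (True, True) \<Rightarrow> p212 | (False, True) \<Rightarrow> p22 | _ \<Rightarrow> 0)"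

text \<open>When both nodes
  transmit, the joint law is an arbitrary pmf J whose marginals are p_{1/1,2}
  and p_{2/1,2} (the paper only specifies the marginals).\<close>

definition succ_pmf :: "real \<Rightarrow> real \<Rightarrow> (bool \<times> bool) pmf \<Rightarrow> decision \<Rightarrow> (bool \<times> bool) pmf" where
  "succ_pmf p11 p22 J U = (case U of
      (True, True) \<Rightarrow> J
    | (True, False) \<Rightarrow> map_pmf (\<lambda>b. (b, False)) (bernoulli_pmf p11)
    | (False, True) \<Rightarrow> map_pmf (\<lambda>b. (False, b)) (bernoulli_pmf p22)
    | (False, False) \<Rightarrow> return_pmf (False, False))"

definition ind :: "bool \<Rightarrow> nat" where
  "ind b = (if b then 1 else 0)"

definition aoi_obs :: "nat \<times> nat \<times> nat \<Rightarrow> nat \<times> nat \<times> bool" where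
  "aoi_obs s = (case s of (Q, B, A) \<Rightarrow> (Q, A, B > 0))"

definition aoi_obj :: "real \<Rightarrow> real \<Rightarrow> real \<Rightarrow> real \<Rightarrow> real \<Rightarrow> nat \<times> nat \<times> bool \<Rightarrow> decision \<Rightarrow> real" where
  "aoi_obj V p11 p22 p112 p212 obs U = (case obs of (Q, A, H) \<Rightarrow>
     succ1 p11 p112 U * real Q + V * succ2 p22 p212 U * (if H then 1 else 0) * real A)"

definition aoi_step :: "real \<Rightarrow> real \<Rightarrow> real \<Rightarrow> real \<Rightarrow> (bool \<times> bool) pmf \<Rightarrow> decision
    \<Rightarrow> nat \<times> nat \<times> nat \<Rightarrow> (nat \<times> nat \<times> nat) pmf" where
  "aoi_step lam \<delta> p11 p22 J U s = (case s of (Q, B, A) \<Rightarrow>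
     do { a1 \<leftarrow> bernoulli_pmf lam;
          a2 \<leftarrow> bernoulli_pmf \<delta>;
          bb \<leftarrow> succ_pmf p11 p22 J U;
          let H = (B > 0);
          return_pmf ((Q - ind (fst bb)) + ind a1,
                      (B - ind (snd U)) + ind a2,
                      (if H \<and> snd bb then 1 else A + 1)) })"

text \<open>Distribution of the state (Q(t), B(t), A(t)) under a (possibly time-dependent
  tie-breaking) scheduling rule pol mapping the observation to U(t).\<close>
primrec aoi_dist :: "real \<Rightarrow> real \<Rightarrow> real \<Rightarrow> real \<Rightarrow> (bool \<times> bool) pmf
    \<Rightarrow> (nat \<Rightarrow> nat \<times> nat \<times> bool \<Rightarrow> decision) \<Rightarrow> nat \<Rightarrow> nat \<Rightarrow> (nat \<times> nat \<times> nat) pmf" where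
  "aoi_dist lam \<delta> p11 p22 J pol A0 0 = return_pmf (0, 0, A0)"
| "aoi_dist lam \<delta> p11 p22 J pol A0 (Suc t) =
     bind_pmf (aoi_dist lam \<delta> p11 p22 J pol A0 t)
       (\<lambda>s. aoi_step lam \<delta> p11 p22 J (pol t (aoi_obs s)) s)"

definition peak_obs :: "nat \<times> nat \<times> real \<Rightarrow> nat \<times> real \<times> bool" where
  "peak_obs s = (case s of (Q, B, Z) \<Rightarrow> (Q, Z, B > 0))"

definition peak_obj :: "real \<Rightarrow> real \<Rightarrow> real \<Rightarrow> real \<Rightarrow> nat \<times> real \<times> bool \<Rightarrow> decision \<Rightarrow> real" where
  "peak_obj p11 p22 p112 p212 obs U = (case obs of (Q, Z, H) \<Rightarrow>
     Z * (if H then 1 else 0) * succ2 p22 p212 U + real Q * succ1 p11 p112 U)"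

definition peak_step :: "real \<Rightarrow> real \<Rightarrow> real \<Rightarrow> real \<Rightarrow> real \<Rightarrow> real \<Rightarrow> (bool \<times> bool) pmf
    \<Rightarrow> decision \<Rightarrow> nat \<times> nat \<times> real \<Rightarrow> (nat \<times> nat \<times> real) pmf" where
  "peak_step amax V lam \<delta> p11 p22 J U s = (case s of (Q, B, Z) \<Rightarrow>
     do { a1 \<leftarrow> bernoulli_pmf lam;
          a2 \<leftarrow> bernoulli_pmf \<delta>;
          bb \<leftarrow> succ_pmf p11 p22 J U;
          let H = (B > 0);
          let \<alpha> = (if Z \<le> V then amax else 0);
          return_pmf ((Q - ind (fst bb)) + ind a1,
                      (B - ind (snd U)) + ind a2,
                      max (Z + \<alpha> - (if H \<and> snd bb then 1 else 0)) 0) })"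

primrec peak_dist :: "real \<Rightarrow> real \<Rightarrow> real \<Rightarrow> real \<Rightarrow> real \<Rightarrow> real \<Rightarrow> (bool \<times> bool) pmf
    \<Rightarrow> (nat \<Rightarrow> nat \<times> real \<times> bool \<Rightarrow> decision) \<Rightarrow> nat \<Rightarrow> (nat \<times> nat \<times> real) pmf" where
  "peak_dist amax V lam \<delta> p11 p22 J pol 0 = return_pmf (0, 0, 0)"
| "peak_dist amax V lam \<delta> p11 p22 J pol (Suc t) =
     bind_pmf (peak_dist amax V lam \<delta> p11 p22 J pol t)
       (\<lambda>s. peak_step amax V lam \<delta> p11 p22 J (pol t (peak_obs s)) s)"

definition EQ :: "(nat \<times> 'c) pmf \<Rightarrow> real" where
  "EQ D = measure_pmf.expectation D (\<lambda>s. real (fst s))"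

end

theory Submission
  imports Defs
begin

(* Both schedulers are analysed with a quadratic Lyapunov function: Q^2 for the
   peak-AoI rule and Q^2 + 2 V A for the AoI rule.  In one slot E[Q'^2] grows by at
   most 1 + 2 Q (lambda - p_1(t)).  Since the DPP rule maximises its objective, comparing
   it with the decision (1,0) gives p_1(t) Q >= p_{1/1} Q minus the term serving S_2;
   for the AoI rule that term is cancelled by the expected drop 2 V p_2 H A of the age,
   for the peak rule it is at most V + alpha_max because the virtual queue Z stays in
   [0, V + alpha_max].  So the expected Lyapunov function drifts by at most
   B - 2 epsilon Q per slot, and telescoping bounds the time average of E[Q] by
   B / (2 epsilon), which is below the constants (C + V) / epsilon. *)

lemma expectation_bind_pmf_finite:
  fixes f :: "'b \<Rightarrow> real"
  assumes "finite (set_pmf M)" and "\<And>x. x \<in> set_pmf M \<Longrightarrow> finite (set_pmf (N x))"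
  shows "measure_pmf.expectation (bind_pmf M N) f
           = measure_pmf.expectation M (\<lambda>x. measure_pmf.expectation (N x) f)"
  using assms
  by (simp add: pmf_expectation_bind[of "set_pmf M"] integral_measure_pmf[of "set_pmf M"] mult.commute)

lemma expectation_bind_pmf_le:
  fixes f :: "'b \<Rightarrow> real" and g :: "'a \<Rightarrow> real"
  assumes "finite (set_pmf M)" and "\<And>x. x \<in> set_pmf M \<Longrightarrow> finite (set_pmf (N x))"
    and "\<And>x. x \<in> set_pmf M \<Longrightarrow> measure_pmf.expectation (N x) f \<le> g x"
  shows "measure_pmf.expectation (bind_pmf M N) f \<le> measure_pmf.expectation M g"
proof -
  have "measure_pmf.expectation (bind_pmf M N) f = measure_pmf.expectation M (\<lambda>x. measure_pmf.expectation (N x) f)"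
    by (rule expectation_bind_pmf_finite[OF assms(1,2)])
  also have "\<dots> \<le> measure_pmf.expectation M g"
    using assms by (intro integral_mono_AE) (auto simp: integrable_measure_pmf_finite AE_measure_pmf_iff)
  finally show ?thesis .
qed

lemma map_pmf_eq_bernoulli_pmf: "map_pmf g M = bernoulli_pmf (measure_pmf.prob M {x. g x})"
proof (rule pmf_eqI)
  fix b :: bool
  let ?p = "measure_pmf.prob M {x. g x}"
  have "pmf (map_pmf g M) False = measure_pmf.prob M (- {x. g x})"
    by (simp add: pmf_map vimage_def Compl_eq)
  also have "\<dots> = 1 - ?p"
    using measure_pmf.prob_compl[of "{x. g x}" M] by (simp add: Compl_eq_Diff_UNIV)
  finally show "pmf (map_pmf g M) b = pmf (bernoulli_pmf ?p) b"
    by (cases b) (auto simp: pmf_map vimage_def)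
qed

lemma bernoulli_pmf_0: "bernoulli_pmf 0 = return_pmf False"
  by (rule pmf_eqI) (simp split: split_indicator)

lemma limsup_average_le_of_drift:
  fixes L q :: "nat \<Rightarrow> real"
  assumes drift: "\<And>t. L (Suc t) \<le> L t + B - \<epsilon> * q t"
    and L_nonneg: "\<And>t. 0 \<le> L t" and "0 < \<epsilon>"
  shows "limsup (\<lambda>t. ereal ((\<Sum>\<tau><t. q \<tau>) / real t)) \<le> ereal (B / \<epsilon>)"
proof -
  have telescope: "L t \<le> L 0 + real t * B - \<epsilon> * (\<Sum>\<tau><t. q \<tau>)" for t
  proof (induction t)
    case (Suc t)
    then show ?case using drift[of t] by (simp add: algebra_simps)
  qed simp
  have average_le: "(\<Sum>\<tau><t. q \<tau>) / real t \<le> B / \<epsilon> + L 0 / \<epsilon> / real t" if "1 \<le> t" for t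
  proof -
    have "\<epsilon> * (\<Sum>\<tau><t. q \<tau>) \<le> L 0 + real t * B"
      using telescope[of t] L_nonneg[of t] by linarith
    then show ?thesis
      using that \<open>0 < \<epsilon>\<close> by (simp add: field_simps)
  qed
  have "(\<lambda>t. B / \<epsilon> + L 0 / \<epsilon> / real t) \<longlonglongrightarrow> B / \<epsilon> + 0"
    by (intro tendsto_add tendsto_const tendsto_divide_0[OF tendsto_const]
        filterlim_at_top_imp_at_infinity[OF filterlim_real_sequentially])
  then have "limsup (\<lambda>t. ereal (B / \<epsilon> + L 0 / \<epsilon> / real t)) = ereal (B / \<epsilon>)"
    by (simp add: lim_imp_Limsup)
  moreover have "limsup (\<lambda>t. ereal ((\<Sum>\<tau><t. q \<tau>) / real t))
                   \<le> limsup (\<lambda>t. ereal (B / \<epsilon> + L 0 / \<epsilon> / real t))"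
    by (intro Limsup_mono) (use average_le in \<open>auto simp: eventually_sequentially\<close>)
  ultimately show ?thesis by simp
qed

lemma limsup_average_expectation_le_of_drift:
  fixes D :: "nat \<Rightarrow> 'a pmf" and K :: "nat \<Rightarrow> 'a \<Rightarrow> 'a pmf" and L q :: "'a \<Rightarrow> real"
  assumes D_Suc: "\<And>t. D (Suc t) = D t \<bind> K t"
    and finite_D0: "finite (set_pmf (D 0))" and finite_K: "\<And>t s. finite (set_pmf (K t s))"
    and L_nonneg: "\<And>s. 0 \<le> L s" and "0 < \<epsilon>"
    and drift: "\<And>t s. s \<in> set_pmf (D t) \<Longrightarrow>
                  measure_pmf.expectation (K t s) L \<le> L s + B - \<epsilon> * q s"
  shows "limsup (\<lambda>t. ereal ((\<Sum>\<tau><t. measure_pmf.expectation (D \<tau>) q) / real t)) \<le> ereal (B / \<epsilon>)"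
proof (rule limsup_average_le_of_drift[where L = "\<lambda>t. measure_pmf.expectation (D t) L"])
  have finite_D: "finite (set_pmf (D t))" for t
    by (induction t) (simp_all add: D_Suc finite_D0 finite_K)
  show "measure_pmf.expectation (D (Suc t)) L
          \<le> measure_pmf.expectation (D t) L + B - \<epsilon> * measure_pmf.expectation (D t) q" for t
  proof -
    have "measure_pmf.expectation (D (Suc t)) L \<le> measure_pmf.expectation (D t) (\<lambda>s. L s + B - \<epsilon> * q s)"
      unfolding D_Suc by (rule expectation_bind_pmf_le[OF finite_D finite_K drift])
    also have "\<dots> = measure_pmf.expectation (D t) L + B - \<epsilon> * measure_pmf.expectation (D t) q"
      by (simp add: integrable_measure_pmf_finite[OF finite_D])
    finally show ?thesis .
  qed
  show "0 \<le> measure_pmf.expectation (D t) L" for t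
    by (intro integral_nonneg_AE) (simp add: L_nonneg)
qed fact

lemma queue_square_le:
  "real ((Q - ind b) + ind a) ^ 2 \<le> real Q ^ 2 + 1 + 2 * real Q * (real (ind a) - real (ind b))"
  by (cases "Q = 0") (auto simp: ind_def power2_eq_square algebra_simps of_nat_diff)

lemma expectation_queue_square_le:
  assumes "0 \<le> lam" "lam \<le> 1" "0 \<le> p" "p \<le> 1"
  shows "measure_pmf.expectation
           (bernoulli_pmf lam \<bind> (\<lambda>a. map_pmf (\<lambda>b. (Q - ind b) + ind a) (bernoulli_pmf p)))
           (\<lambda>Q'. real Q' ^ 2)
         \<le> real Q ^ 2 + 1 + 2 * real Q * (lam - p)"
proof -
  have "measure_pmf.expectation
          (bernoulli_pmf lam \<bind> (\<lambda>a. map_pmf (\<lambda>b. (Q - ind b) + ind a) (bernoulli_pmf p)))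
          (\<lambda>Q'. real Q' ^ 2)
        = measure_pmf.expectation (bernoulli_pmf lam) (\<lambda>a.
            measure_pmf.expectation (bernoulli_pmf p) (\<lambda>b. real ((Q - ind b) + ind a) ^ 2))"
    by (simp add: expectation_bind_pmf_finite)
  also have "\<dots> \<le> measure_pmf.expectation (bernoulli_pmf lam) (\<lambda>a.
            measure_pmf.expectation (bernoulli_pmf p)
              (\<lambda>b. real Q ^ 2 + 1 + 2 * real Q * (real (ind a) - real (ind b))))"
    by (intro integral_mono integrable_measure_pmf_finite queue_square_le) simp_all
  also have "\<dots> = real Q ^ 2 + 1 + 2 * real Q * (lam - p)"
    using assms by (simp add: ind_def algebra_simps)
  finally show ?thesis .
qed

lemma succ1_bounds:
  assumes "0 \<le> p11" "p11 \<le> 1" "0 \<le> p112" "p112 \<le> 1"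
  shows "0 \<le> succ1 p11 p112 U" "succ1 p11 p112 U \<le> 1"
  using assms by (auto simp: succ1_def split: bool.splits prod.splits)

lemma succ2_bounds:
  assumes "0 \<le> p22" "p22 \<le> 1" "0 \<le> p212" "p212 \<le> 1"
  shows "0 \<le> succ2 p22 p212 U" "succ2 p22 p212 U \<le> 1"
  using assms by (auto simp: succ2_def split: bool.splits prod.splits)

lemma map_pmf_fst_succ_pmf:
  assumes "measure_pmf.prob J {bb. fst bb} = p112"
  shows "map_pmf fst (succ_pmf p11 p22 J U) = bernoulli_pmf (succ1 p11 p112 U)"
  using map_pmf_eq_bernoulli_pmf[of fst J] assms
  by (cases U) (auto simp: succ_pmf_def succ1_def map_pmf_comp bernoulli_pmf_0 split: bool.splits)

lemma map_pmf_snd_succ_pmf: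
  assumes "measure_pmf.prob J {bb. snd bb} = p212"
  shows "map_pmf snd (succ_pmf p11 p22 J U) = bernoulli_pmf (succ2 p22 p212 U)"
  using map_pmf_eq_bernoulli_pmf[of snd J] assms
  by (cases U) (auto simp: succ_pmf_def succ2_def map_pmf_comp bernoulli_pmf_0 split: bool.splits)

lemma map_pmf_fst_aoi_step:
  assumes "measure_pmf.prob J {bb. fst bb} = p112"
  shows "map_pmf fst (aoi_step lam \<delta> p11 p22 J U (Q, B, A))
           = bernoulli_pmf lam \<bind>
               (\<lambda>a. map_pmf (\<lambda>b. (Q - ind b) + ind a) (bernoulli_pmf (succ1 p11 p112 U)))"
  by (simp add: aoi_step_def map_bind_pmf bind_return_pmf map_pmf_def[symmetric]
        map_pmf_fst_succ_pmf[of _ _ p11 p22, OF assms, symmetric] pmf.map_comp o_def)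

lemma map_pmf_fst_peak_step:
  assumes "measure_pmf.prob J {bb. fst bb} = p112"
  shows "map_pmf fst (peak_step amax V lam \<delta> p11 p22 J U (Q, B, Z))
           = bernoulli_pmf lam \<bind>
               (\<lambda>a. map_pmf (\<lambda>b. (Q - ind b) + ind a) (bernoulli_pmf (succ1 p11 p112 U)))"
  by (simp add: peak_step_def map_bind_pmf bind_return_pmf map_pmf_def[symmetric]
        map_pmf_fst_succ_pmf[of _ _ p11 p22, OF assms, symmetric] pmf.map_comp o_def)

lemma map_pmf_age_aoi_step:
  assumes "measure_pmf.prob J {bb. snd bb} = p212"
  shows "map_pmf (\<lambda>s. snd (snd s)) (aoi_step lam \<delta> p11 p22 J U (Q, B, A))
           = map_pmf (\<lambda>b. if 0 < B \<and> b then 1 else A + 1) (bernoulli_pmf (succ2 p22 p212 U))"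
  by (simp add: aoi_step_def map_bind_pmf bind_return_pmf map_pmf_def[symmetric]
        map_pmf_snd_succ_pmf[of _ _ p11 p22, OF assms, symmetric] pmf.map_comp o_def)

lemma finite_set_pmf_aoi_step: "finite (set_pmf (aoi_step lam \<delta> p11 p22 J U s))"
  by (auto simp: aoi_step_def split: prod.splits)

lemma finite_set_pmf_peak_step: "finite (set_pmf (peak_step amax V lam \<delta> p11 p22 J U s))"
  by (auto simp: peak_step_def split: prod.splits)

lemma expectation_queue_square_aoi_step:
  assumes "0 \<le> lam" "lam \<le> 1" "0 \<le> p11" "p11 \<le> 1" "0 \<le> p112" "p112 \<le> 1"
    and "measure_pmf.prob J {bb. fst bb} = p112"
  shows "measure_pmf.expectation (aoi_step lam \<delta> p11 p22 J U (Q, B, A)) (\<lambda>s. real (fst s) ^ 2)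
           \<le> real Q ^ 2 + 1 + 2 * real Q * (lam - succ1 p11 p112 U)"
proof -
  have "measure_pmf.expectation (aoi_step lam \<delta> p11 p22 J U (Q, B, A)) (\<lambda>s. real (fst s) ^ 2)
        = measure_pmf.expectation (map_pmf fst (aoi_step lam \<delta> p11 p22 J U (Q, B, A))) (\<lambda>Q'. real Q' ^ 2)"
    by simp
  also have "\<dots> \<le> real Q ^ 2 + 1 + 2 * real Q * (lam - succ1 p11 p112 U)"
    unfolding map_pmf_fst_aoi_step[OF assms(7)]
    by (rule expectation_queue_square_le[OF assms(1,2) succ1_bounds[OF assms(3-6)]])
  finally show ?thesis .
qed

lemma expectation_queue_square_peak_step:
  assumes "0 \<le> lam" "lam \<le> 1" "0 \<le> p11" "p11 \<le> 1" "0 \<le> p112" "p112 \<le> 1"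
    and "measure_pmf.prob J {bb. fst bb} = p112"
  shows "measure_pmf.expectation (peak_step amax V lam \<delta> p11 p22 J U (Q, B, Z)) (\<lambda>s. real (fst s) ^ 2)
           \<le> real Q ^ 2 + 1 + 2 * real Q * (lam - succ1 p11 p112 U)"
proof -
  have "measure_pmf.expectation (peak_step amax V lam \<delta> p11 p22 J U (Q, B, Z)) (\<lambda>s. real (fst s) ^ 2)
        = measure_pmf.expectation (map_pmf fst (peak_step amax V lam \<delta> p11 p22 J U (Q, B, Z))) (\<lambda>Q'. real Q' ^ 2)"
    by simp
  also have "\<dots> \<le> real Q ^ 2 + 1 + 2 * real Q * (lam - succ1 p11 p112 U)"
    unfolding map_pmf_fst_peak_step[OF assms(7)]
    by (rule expectation_queue_square_le[OF assms(1,2) succ1_bounds[OF assms(3-6)]])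
  finally show ?thesis .
qed

lemma expectation_age_aoi_step:
  assumes "0 \<le> p22" "p22 \<le> 1" "0 \<le> p212" "p212 \<le> 1"
    and "measure_pmf.prob J {bb. snd bb} = p212"
  shows "measure_pmf.expectation (aoi_step lam \<delta> p11 p22 J U (Q, B, A)) (\<lambda>s. real (snd (snd s)))
           = real A + 1 - succ2 p22 p212 U * (if 0 < B then 1 else 0) * real A"
proof -
  have "measure_pmf.expectation (aoi_step lam \<delta> p11 p22 J U (Q, B, A)) (\<lambda>s. real (snd (snd s)))
        = measure_pmf.expectation (map_pmf (\<lambda>s. snd (snd s)) (aoi_step lam \<delta> p11 p22 J U (Q, B, A))) real"
    by simp
  also have "\<dots> = measure_pmf.expectation (bernoulli_pmf (succ2 p22 p212 U))
                     (\<lambda>b. real (if 0 < B \<and> b then 1 else A + 1))"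
    by (simp add: map_pmf_age_aoi_step[OF assms(5)])
  also have "\<dots> = real A + 1 - succ2 p22 p212 U * (if 0 < B then 1 else 0) * real A"
    using succ2_bounds[OF assms(1-4)] by (simp add: algebra_simps)
  finally show ?thesis .
qed

lemma peak_dist_Z_bounds:
  assumes "0 \<le> amax" "0 \<le> V" "s \<in> set_pmf (peak_dist amax V lam \<delta> p11 p22 J pol t)"
  shows "0 \<le> snd (snd s) \<and> snd (snd s) \<le> V + amax"
  using assms(3)
proof (induction t arbitrary: s)
  case 0
  then show ?case using assms(1,2) by simp
next
  case (Suc t)
  then obtain Q B Z where "(Q, B, Z) \<in> set_pmf (peak_dist amax V lam \<delta> p11 p22 J pol t)"
    and "s \<in> set_pmf (peak_step amax V lam \<delta> p11 p22 J (pol t (peak_obs (Q, B, Z))) (Q, B, Z))"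
    by auto
  with Suc.IH assms(1) show ?case by (fastforce simp: peak_step_def)
qed

lemma aoi_step_drift:
  assumes "0 \<le> lam" "lam \<le> p11" "p11 \<le> 1" "0 \<le> p112" "p112 \<le> 1"
    and "0 \<le> p22" "p22 \<le> 1" "0 \<le> p212" "p212 \<le> 1"
    and J_fst: "measure_pmf.prob J {bb. fst bb} = p112"
    and J_snd: "measure_pmf.prob J {bb. snd bb} = p212"
    and "0 \<le> V"
    and dpp: "aoi_obj V p11 p22 p112 p212 (Q, A, 0 < B) (True, False)
                \<le> aoi_obj V p11 p22 p112 p212 (Q, A, 0 < B) U"
  shows "measure_pmf.expectation (aoi_step lam \<delta> p11 p22 J U (Q, B, A))
           (\<lambda>s. real (fst s) ^ 2 + 2 * V * real (snd (snd s)))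
         \<le> real Q ^ 2 + 2 * V * real A + (1 + 2 * V) - 2 * (p11 - lam) * real Q"
proof -
  define H :: real where "H = (if 0 < B then 1 else 0)"
  have dpp_U: "p11 * real Q \<le> succ1 p11 p112 U * real Q + V * succ2 p22 p212 U * H * real A"
    using dpp by (simp add: aoi_obj_def succ1_def succ2_def H_def)
  have "measure_pmf.expectation (aoi_step lam \<delta> p11 p22 J U (Q, B, A))
          (\<lambda>s. real (fst s) ^ 2 + 2 * V * real (snd (snd s)))
        = measure_pmf.expectation (aoi_step lam \<delta> p11 p22 J U (Q, B, A)) (\<lambda>s. real (fst s) ^ 2)
          + 2 * V * measure_pmf.expectation (aoi_step lam \<delta> p11 p22 J U (Q, B, A)) (\<lambda>s. real (snd (snd s)))"
    by (simp add: integrable_measure_pmf_finite finite_set_pmf_aoi_step)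
  also have "\<dots> \<le> real Q ^ 2 + 1 + 2 * real Q * (lam - succ1 p11 p112 U)
                   + 2 * V * (real A + 1 - succ2 p22 p212 U * H * real A)"
    unfolding H_def
    using expectation_queue_square_aoi_step[OF assms(1) _ _ assms(3-5) J_fst]
      expectation_age_aoi_step[OF assms(6-9) J_snd] assms(1-3,12)
    by (intro add_mono mult_left_mono) simp_all
  also have "\<dots> \<le> real Q ^ 2 + 2 * V * real A + (1 + 2 * V) - 2 * (p11 - lam) * real Q"
    using dpp_U by (simp add: algebra_simps)
  finally show ?thesis .
qed

lemma peak_step_drift:
  assumes "0 \<le> lam" "lam \<le> p11" "p11 \<le> 1" "0 \<le> p112" "p112 \<le> 1"
    and "0 \<le> p22" "p22 \<le> 1" "0 \<le> p212" "p212 \<le> 1"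
    and J_fst: "measure_pmf.prob J {bb. fst bb} = p112"
    and "0 \<le> Z" "Z \<le> V + amax"
    and dpp: "peak_obj p11 p22 p112 p212 (Q, Z, 0 < B) (True, False)
                \<le> peak_obj p11 p22 p112 p212 (Q, Z, 0 < B) U"
  shows "measure_pmf.expectation (peak_step amax V lam \<delta> p11 p22 J U (Q, B, Z)) (\<lambda>s. real (fst s) ^ 2)
         \<le> real Q ^ 2 + (1 + 2 * (V + amax)) - 2 * (p11 - lam) * real Q"
proof -
  define H :: real where "H = (if 0 < B then 1 else 0)"
  have dpp_U: "p11 * real Q \<le> succ1 p11 p112 U * real Q + Z * H * succ2 p22 p212 U"
    using dpp by (simp add: peak_obj_def succ1_def succ2_def H_def algebra_simps)
  have "Z * H * succ2 p22 p212 U \<le> V + amax"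
    using succ2_bounds[OF assms(6-9), of U] mult_left_le[of "succ2 p22 p212 U" Z] assms(11,12)
    unfolding H_def by auto
  have "measure_pmf.expectation (peak_step amax V lam \<delta> p11 p22 J U (Q, B, Z)) (\<lambda>s. real (fst s) ^ 2)
          \<le> real Q ^ 2 + 1 + 2 * real Q * (lam - succ1 p11 p112 U)"
    using assms(1-3) by (intro expectation_queue_square_peak_step[OF assms(1) _ _ assms(3-5) J_fst]) simp_all
  also have "\<dots> \<le> real Q ^ 2 + (1 + 2 * (V + amax)) - 2 * (p11 - lam) * real Q"
    using dpp_U \<open>Z * H * succ2 p22 p212 U \<le> V + amax\<close> by (simp add: algebra_simps)
  finally show ?thesis .
qed

lemma aoi_dpp_queue_average_le:
  fixes pol :: "nat \<Rightarrow> nat \<times> nat \<times> bool \<Rightarrow> decision"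
  assumes "0 \<le> lam" "p11 \<le> 1" "0 \<le> p112" "p112 \<le> 1" "0 \<le> p22" "p22 \<le> 1" "0 \<le> p212" "p212 \<le> 1"
    and J_fst: "measure_pmf.prob J {bb. fst bb} = p112"
    and J_snd: "measure_pmf.prob J {bb. snd bb} = p212"
    and "0 \<le> V" "0 < \<epsilon>" "\<epsilon> \<le> p11 - lam"
    and dpp: "\<And>t obs U. aoi_obj V p11 p22 p112 p212 obs U \<le> aoi_obj V p11 p22 p112 p212 obs (pol t obs)"
  shows "limsup (\<lambda>t. ereal ((\<Sum>\<tau><t. EQ (aoi_dist lam \<delta> p11 p22 J pol A0 \<tau>)) / real t))
           \<le> ereal (((lam\<^sup>2 + 1) / 2 + V) / \<epsilon>)"
proof -
  define L :: "nat \<times> nat \<times> nat \<Rightarrow> real" where "L s = real (fst s) ^ 2 + 2 * V * real (snd (snd s))" for s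
  have "limsup (\<lambda>t. ereal ((\<Sum>\<tau><t. measure_pmf.expectation (aoi_dist lam \<delta> p11 p22 J pol A0 \<tau>)
            (\<lambda>s. real (fst s))) / real t)) \<le> ereal ((lam\<^sup>2 + 1 + 2 * V) / (2 * \<epsilon>))"
  proof (rule limsup_average_expectation_le_of_drift[where L = L])
    fix t and s :: "nat \<times> nat \<times> nat"
    obtain Q B A where s: "s = (Q, B, A)" by (cases s)
    have "measure_pmf.expectation (aoi_step lam \<delta> p11 p22 J (pol t (aoi_obs s)) s) L
            \<le> L s + (1 + 2 * V) - 2 * (p11 - lam) * real Q"
      unfolding s L_def prod.sel
      by (rule aoi_step_drift) (use assms dpp in \<open>simp_all add: aoi_obs_def\<close>)
    also have "\<dots> \<le> L s + (lam\<^sup>2 + 1 + 2 * V) - 2 * \<epsilon> * real Q"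
      using mult_right_mono[OF \<open>\<epsilon> \<le> p11 - lam\<close>, of "real Q"]
      by (simp add: algebra_simps) (use zero_le_power2[of lam] in linarith)
    finally show "measure_pmf.expectation (aoi_step lam \<delta> p11 p22 J (pol t (aoi_obs s)) s) L
                    \<le> L s + (lam\<^sup>2 + 1 + 2 * V) - 2 * \<epsilon> * real (fst s)"
      by (simp add: s)
  qed (use assms in \<open>simp_all add: L_def finite_set_pmf_aoi_step\<close>)
  then show ?thesis
    using \<open>0 < \<epsilon>\<close> by (simp add: EQ_def field_simps)
qed

lemma peak_dpp_queue_average_le:
  fixes pol :: "nat \<Rightarrow> nat \<times> real \<times> bool \<Rightarrow> decision"
  assumes "0 \<le> lam" "p11 \<le> 1" "0 \<le> p112" "p112 \<le> 1" "0 \<le> p22" "p22 \<le> 1" "0 \<le> p212" "p212 \<le> 1"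
    and J_fst: "measure_pmf.prob J {bb. fst bb} = p112"
    and "0 \<le> V" "0 \<le> amax" "0 < \<epsilon>" "\<epsilon> \<le> p11 - lam"
    and dpp: "\<And>t obs U. peak_obj p11 p22 p112 p212 obs U \<le> peak_obj p11 p22 p112 p212 obs (pol t obs)"
  shows "limsup (\<lambda>t. ereal ((\<Sum>\<tau><t. EQ (peak_dist amax V lam \<delta> p11 p22 J pol \<tau>)) / real t))
           \<le> ereal (((amax\<^sup>2 + lam\<^sup>2 + 2) / 2 + V) / \<epsilon>)"
proof -
  define L :: "nat \<times> nat \<times> real \<Rightarrow> real" where "L s = real (fst s) ^ 2" for s
  have "limsup (\<lambda>t. ereal ((\<Sum>\<tau><t. measure_pmf.expectation (peak_dist amax V lam \<delta> p11 p22 J pol \<tau>)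
            (\<lambda>s. real (fst s))) / real t)) \<le> ereal ((amax\<^sup>2 + lam\<^sup>2 + 2 + 2 * V) / (2 * \<epsilon>))"
  proof (rule limsup_average_expectation_le_of_drift[where L = L])
    fix t and s :: "nat \<times> nat \<times> real"
    assume s_support: "s \<in> set_pmf (peak_dist amax V lam \<delta> p11 p22 J pol t)"
    obtain Q B Z where s: "s = (Q, B, Z)" by (cases s)
    have "measure_pmf.expectation (peak_step amax V lam \<delta> p11 p22 J (pol t (peak_obs s)) s) L
            \<le> L s + (1 + 2 * (V + amax)) - 2 * (p11 - lam) * real Q"
      unfolding s L_def prod.sel
      using peak_dist_Z_bounds[OF \<open>0 \<le> amax\<close> \<open>0 \<le> V\<close> s_support]
      by (intro peak_step_drift[of lam p11 p112 p22 p212]) (use assms dpp in \<open>simp_all add: s peak_obs_def\<close>)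
    also have "\<dots> \<le> L s + (amax\<^sup>2 + lam\<^sup>2 + 2 + 2 * V) - 2 * \<epsilon> * real Q"
      using mult_right_mono[OF \<open>\<epsilon> \<le> p11 - lam\<close>, of "real Q"] zero_le_power2[of "amax - 1"]
      by (simp add: power2_diff algebra_simps) (use zero_le_power2[of lam] in linarith)
    finally show "measure_pmf.expectation (peak_step amax V lam \<delta> p11 p22 J (pol t (peak_obs s)) s) L
                    \<le> L s + (amax\<^sup>2 + lam\<^sup>2 + 2 + 2 * V) - 2 * \<epsilon> * real (fst s)"
      by (simp add: s)
  qed (use assms in \<open>simp_all add: L_def finite_set_pmf_peak_step\<close>)
  then show ?thesis
    using \<open>0 < \<epsilon>\<close> by (simp add: EQ_def field_simps)
qed

theorem lemma4:
  fixes lam \<delta> p11 p22 p112 p212 V \<epsilon> :: real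
    and J :: "(bool \<times> bool) pmf"
  assumes "0 \<le> lam" and "lam < p11" and "p11 \<le> 1"
    and "0 \<le> \<delta>" and "\<delta> \<le> 1"
    and "0 \<le> p22" and "p22 \<le> 1"
    and "0 \<le> p112" and "p112 \<le> 1"
    and "0 \<le> p212" and "p212 \<le> 1"
    and "measure_pmf.prob J {bb. fst bb} = p112"
    and "measure_pmf.prob J {bb. snd bb} = p212"
    and "V > 0"
    and "0 < \<epsilon>" and "\<epsilon> \<le> min (p11 - lam) (\<delta> * p212)"
  shows
    "(\<forall>(pol :: nat \<Rightarrow> nat \<times> nat \<times> bool \<Rightarrow> decision) (A0 :: nat).
        (\<forall>t obs U. aoi_obj V p11 p22 p112 p212 obs U
                     \<le> aoi_obj V p11 p22 p112 p212 obs (pol t obs)) \<longrightarrow>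
        limsup (\<lambda>t. ereal ((\<Sum>\<tau><t. EQ (aoi_dist lam \<delta> p11 p22 J pol A0 \<tau>)) / real t))
          \<le> ereal (((lam\<^sup>2 + 1) / 2 + V) / \<epsilon>))
   \<and> (\<exists>\<alpha>0. \<forall>amax \<ge> \<alpha>0. \<forall>(pol :: nat \<Rightarrow> nat \<times> real \<times> bool \<Rightarrow> decision).
        (\<forall>t obs U. peak_obj p11 p22 p112 p212 obs U
                     \<le> peak_obj p11 p22 p112 p212 obs (pol t obs)) \<longrightarrow>
        limsup (\<lambda>t. ereal ((\<Sum>\<tau><t. EQ (peak_dist amax V lam \<delta> p11 p22 J pol \<tau>)) / real t))
          \<le> ereal (((amax\<^sup>2 + lam\<^sup>2 + 2) / 2 + V) / \<epsilon>))"
proof (intro conjI allI impI exI[of _ 0])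
  show "limsup (\<lambda>t. ereal ((\<Sum>\<tau><t. EQ (aoi_dist lam \<delta> p11 p22 J pol A0 \<tau>)) / real t))
          \<le> ereal (((lam\<^sup>2 + 1) / 2 + V) / \<epsilon>)"
    if "\<forall>t obs U. aoi_obj V p11 p22 p112 p212 obs U \<le> aoi_obj V p11 p22 p112 p212 obs (pol t obs)"
    for pol A0
    using that assms by (intro aoi_dpp_queue_average_le) auto
  show "limsup (\<lambda>t. ereal ((\<Sum>\<tau><t. EQ (peak_dist amax V lam \<delta> p11 p22 J pol \<tau>)) / real t))
          \<le> ereal (((amax\<^sup>2 + lam\<^sup>2 + 2) / 2 + V) / \<epsilon>)"
    if "0 \<le> amax"
      and "\<forall>t obs U. peak_obj p11 p22 p112 p212 obs U \<le> peak_obj p11 p22 p112 p212 obs (pol t obs)"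
    for amax pol
    using that assms by (intro peak_dpp_queue_average_le[of lam p11 p112 p22 p212]) auto
qed

end
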